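(* Fix $\alpha_1<1$. Let $\mathcal U^{\mathrm{item}}_{\mathrm{lex}}=\{u\in\mathcal U:\forall u'\in\mathcal U,\ u_{\mathcal I}\ge_{\mathrm{lex}}u'_{\mathcal I}\}$ and let $u^*\in\arg\max_{u\in\mathcal U^{\mathrm{item}}_{\mathrm{lex}}}\sum_{i\in\mathcal N}\psi(u_i,\alpha_1)$, where we assume this maximum is $>-\infty$. Then for every $\eta>\max(1,\max_{j\in\mathcal I}u^*_j)$ and every $u\in\mathcal U$ there exists $\alpha_0<0$ such that for all $\alpha\le\alpha_0$, $$W_{(1-\eta^\alpha,\alpha_1,\alpha)}(u^* )\ge W_{(1-\eta^\alpha,\alpha_1,\alpha)}(u).$$
   Context: Setup: users $\mathcal N=\{1,\dots,|\mathcal N|\}$, items $\mathcal I=\{|\mathcal N|+1,\dots,n\}$, $n=|\mathcal N|+|\mathcal I|$; exposure weights $v\in\mathbb R^{|\mathcal I|}$ with $v_1\ge\dots\ge v_{|\mathcal I|}\ge0$; values $\mu_{ij}\ge0$ for $i,j\in[n]$. A ranking tensor is $P=(P_{ijk})_{i,j\in[n],k\in[|\mathcal I|]}$ with $P_{ijk}=0$ unless $i\in\mathcal N,j\in\mathcal I$, and each $P_i=(P_{ijk})_{j\in\mathcal I,k}$ doubly stochastic; $\mathcal P$ is the set of ranking tensors; $P_{ij}v=\sum_kP_{ijk}v_k$; $u_i(P)=\sum_{j=1}^n\mu_{ij}(P_{ij}+P_{ji})v$; $\mathcal U=\{(u_i(P))_{i\in[n]}:P\in\mathcal P\}$; $u_{\mathcal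 N}=(u_i)_{i\in\mathcal N}$, $u_{\mathcal I}=(u_j)_{j\in\mathcal I}$. Leximin order: for $x\in\mathbb R^m$ with increasingly sorted entries $x_{(1)}\le\dots\le x_{(m)}$, let $\bar x_k=\sum_{l\le k}x_{(l)}$. $x>_{\mathrm{lex}}y$ iff there is $k$ with $\bar x_l=\bar y_l$ for all $l<k$ and $\bar x_k>\bar y_k$; $x\ge_{\mathrm{lex}}y$ iff not $y>_{\mathrm{lex}}x$. Welfare: $\psi(x,\alpha)=x^\alpha$ ($\alpha>0$), $\log x$ ($\alpha=0$), $-x^\alpha$ ($\alpha<0$), with $\psi(0,\alpha)=-\infty$ for $\alpha\le0$; for $\theta=(\lambda,\alpha_1,\alpha_2)$, $W_\theta(u)=(1-\lambda)\sum_{i\in\mathcal N}\psi(u_i,\alpha_1)+\lambda\sum_{j\in\mathcal I}\psi(u_j,\alpha_2)$. *)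

theory Defs
  imports Complex_Main "HOL-Library.Extended_Real"
begin

text \<open>Users are 1..m, items are m+1..n (so |N| = m, |I| = n - m).
  Exposure weights v are indexed by positions 1..n-m.
  Utility vectors are functions nat => real, meaningful on 1..n (0 elsewhere).\<close>

definition users :: "nat \<Rightarrow> nat set" where
  "users m = {1..m}"

definition items :: "nat \<Rightarrow> nat \<Rightarrow> nat set" where
  "items m n = {m+1..n}"

definition ranking_tensor :: "nat \<Rightarrow> nat \<Rightarrow> (nat \<Rightarrow> nat \<Rightarrow> nat \<Rightarrow> real) \<Rightarrow> bool" where
  "ranking_tensor m n P \<longleftrightarrow>
     (\<forall>i j k. P i j k \<noteq> 0 \<longrightarrow> i \<in> users m \<and> j \<in> items m n \<and> k \<in> {1..n-m}) \<and>
     (\<forall>i\<in>users m. \<forall>j\<in>items m n. \<forall>k\<in>{1..n-m}. 0 \<le> P i j k) \<and>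
     (\<forall>i\<in>users m. \<forall>j\<in>items m n. (\<Sum>k\<in>{1..n-m}. P i j k) = 1) \<and>
     (\<forall>i\<in>users m. \<forall>k\<in>{1..n-m}. (\<Sum>j\<in>items m n. P i j k) = 1)"

definition Pv :: "nat \<Rightarrow> nat \<Rightarrow> (nat \<Rightarrow> nat \<Rightarrow> nat \<Rightarrow> real) \<Rightarrow> (nat \<Rightarrow> real) \<Rightarrow> nat \<Rightarrow> nat \<Rightarrow> real" where
  "Pv m n P v i j = (\<Sum>k\<in>{1..n-m}. P i j k * v k)"

definition util :: "nat \<Rightarrow> nat \<Rightarrow> (nat \<Rightarrow> nat \<Rightarrow> real) \<Rightarrow> (nat \<Rightarrow> real)
     \<Rightarrow> (nat \<Rightarrow> nat \<Rightarrow> nat \<Rightarrow> real) \<Rightarrow> nat \<Rightarrow> real" where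
  "util m n \<mu> v P = (\<lambda>i. if i \<in> {1..n}
       then (\<Sum>j\<in>{1..n}. \<mu> i j * (Pv m n P v i j + Pv m n P v j i)) else 0)"

definition Uset :: "nat \<Rightarrow> nat \<Rightarrow> (nat \<Rightarrow> nat \<Rightarrow> real) \<Rightarrow> (nat \<Rightarrow> real) \<Rightarrow> (nat \<Rightarrow> real) set" where
  "Uset m n \<mu> v = {util m n \<mu> v P | P. ranking_tensor m n P}"

definition sorted_vals :: "nat set \<Rightarrow> (nat \<Rightarrow> real) \<Rightarrow> real list" where
  "sorted_vals A x = sort (map x (sorted_list_of_set A))"

definition prefsum :: "nat set \<Rightarrow> (nat \<Rightarrow> real) \<Rightarrow> nat \<Rightarrow> real" where
  "prefsum A x k = sum_list (take k (sorted_vals A x))"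

definition lex_gt :: "nat set \<Rightarrow> (nat \<Rightarrow> real) \<Rightarrow> (nat \<Rightarrow> real) \<Rightarrow> bool" where
  "lex_gt A x y \<longleftrightarrow> (\<exists>k\<in>{1..card A}. (\<forall>l\<in>{1..<k}. prefsum A x l = prefsum A y l)
                                       \<and> prefsum A x k > prefsum A y k)"

definition lex_ge :: "nat set \<Rightarrow> (nat \<Rightarrow> real) \<Rightarrow> (nat \<Rightarrow> real) \<Rightarrow> bool" where
  "lex_ge A x y \<longleftrightarrow> \<not> lex_gt A y x"

definition Ulex_item :: "nat \<Rightarrow> nat \<Rightarrow> (nat \<Rightarrow> nat \<Rightarrow> real) \<Rightarrow> (nat \<Rightarrow> real) \<Rightarrow> (nat \<Rightarrow> real) set" where
  "Ulex_item m n \<mu> v = {u \<in> Uset m n \<mu> v. \<forall>u'\<in>Uset m n \<mu> v. lex_ge (items m n) u u'}"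

definition psi :: "real \<Rightarrow> real \<Rightarrow> ereal" where
  "psi x \<alpha> = (if \<alpha> > 0 then ereal (x powr \<alpha>)
              else if x = 0 then -\<infinity>
              else if \<alpha> = 0 then ereal (ln x)
              else ereal (- (x powr \<alpha>)))"

definition W :: "nat \<Rightarrow> nat \<Rightarrow> real \<Rightarrow> real \<Rightarrow> real \<Rightarrow> (nat \<Rightarrow> real) \<Rightarrow> ereal" where
  "W m n lam \<alpha>1 \<alpha>2 u =
     ereal (1 - lam) * (\<Sum>i\<in>users m. psi (u i) \<alpha>1) + ereal lam * (\<Sum>j\<in>items m n. psi (u j) \<alpha>2)"

end

theory Submission
  imports Defs "HOL-Library.Multiset"
begin

text \<open>If \<open>u\<close> and \<open>u\<^sup>*\<close> have the same sorted item utilities, their item welfare agrees for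
  every exponent and \<open>u\<close> is leximin optimal as well, so the user term decides. Otherwise
  leximin optimality of \<open>u\<^sup>*\<close> gives a first sorted position \<open>k\<close> at which \<open>u\<close> is strictly worse,
  say \<open>a < b\<close>. For \<open>\<alpha> < 0\<close> the item welfare of \<open>u\<^sup>*\<close> then exceeds that of \<open>u\<close> by at least
  \<open>a powr \<alpha> - |\<I>| * b powr \<alpha>\<close>, with weight \<open>1 - \<eta> powr \<alpha>\<close>, whereas the user welfare gap has
  weight \<open>\<eta> powr \<alpha>\<close>. After dividing by \<open>a powr \<alpha>\<close>, the facts \<open>a < b\<close> and \<open>a < \<eta>\<close> make
  the item gap dominate as \<open>\<alpha> \<rightarrow> -\<infinity>\<close>. A zero item utility or user welfare \<open>-\<infinity>\<close> of \<open>u\<close>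
  makes \<open>W(u) = -\<infinity>\<close> for all \<open>\<alpha> < 0\<close>.\<close>

lemma powr_tendsto_zero_at_bot:
  fixes c :: real
  assumes "1 < c"
  shows "((\<lambda>t. c powr t) \<longlongrightarrow> 0) at_bot"
proof -
  have "filterlim (\<lambda>t. ln c * t) at_bot at_bot"
    using assms by (intro filterlim_tendsto_pos_mult_at_bot[OF tendsto_const] filterlim_ident) auto
  then have "((\<lambda>t. exp (ln c * t)) \<longlongrightarrow> 0) at_bot"
    by (rule filterlim_compose[OF exp_at_bot])
  then show ?thesis
    using assms by (simp add: powr_def mult.commute)
qed

lemma eventually_powr_gap_at_bot:
  fixes a b c C N :: real
  assumes "0 < a" "a < b" "a < c" "1 < c"
  shows "eventually (\<lambda>t. c powr t * C \<le> (1 - c powr t) * (a powr t - N * b powr t)) at_bot"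
proof -
  have "((\<lambda>t. (c / a) powr t * C) \<longlongrightarrow> 0 * C) at_bot"
    using assms by (intro tendsto_mult powr_tendsto_zero_at_bot tendsto_const) simp
  then have small: "eventually (\<lambda>t. (c / a) powr t * C < 1/2) at_bot"
    by (rule order_tendstoD) simp
  have "((\<lambda>t. (1 - c powr t) * (1 - N * (b / a) powr t)) \<longlongrightarrow> (1 - 0) * (1 - N * 0)) at_bot"
    using assms by (intro tendsto_intros powr_tendsto_zero_at_bot) simp_all
  then have large: "eventually (\<lambda>t. 1/2 < (1 - c powr t) * (1 - N * (b / a) powr t)) at_bot"
    by (rule order_tendstoD) simp
  show ?thesis
    using small large
  proof eventually_elim
    case (elim t)
    have "c powr t * C = a powr t * ((c / a) powr t * C)"
      using assms by (simp add: powr_divide)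
    also have "\<dots> \<le> a powr t * ((1 - c powr t) * (1 - N * (b / a) powr t))"
      using elim assms by (intro mult_left_mono) simp_all
    also have "\<dots> = (1 - c powr t) * (a powr t - N * b powr t)"
      using assms by (simp add: powr_divide field_simps)
    finally show ?case .
  qed
qed

lemma eventually_at_bot_real_negative:
  assumes "eventually P at_bot"
  shows "\<exists>t0 < 0. \<forall>t \<le> t0. P (t :: real)"
proof -
  obtain N where "\<forall>t \<le> N. P t"
    using assms by (auto simp: eventually_at_bot_linorder)
  then show ?thesis
    by (intro exI[of _ "min N (-1)"]) auto
qed

lemma sum_list_powr_gap:
  fixes xs ys :: "real list" and t :: real
  assumes "sorted xs" "length ys = length xs" "k < length xs"
    and "\<forall>l<k. xs ! l = ys ! l" "0 < xs ! k" "t \<le> 0"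
  shows "ys ! k powr t - length xs * xs ! k powr t
           \<le> sum_list (map (\<lambda>s. s powr t) ys) - sum_list (map (\<lambda>s. s powr t) xs)"
proof -
  let ?b = "xs ! k powr t"
  define g where "g l = (if l = k then ys ! k powr t else 0) - ?b" for l
  have "g l \<le> ys ! l powr t - xs ! l powr t" if "l < length xs" for l
  proof -
    consider "l < k" | "l = k" | "k < l" by linarith
    then show ?thesis
    proof cases
      case 3
      then have "xs ! k \<le> xs ! l"
        using assms(1) that by (simp add: sorted_nth_mono)
      then have "xs ! l powr t \<le> ?b"
        using assms(5,6) by (simp add: powr_mono2')
      moreover have "g l = - ?b"
        using 3 by (simp add: g_def)
      ultimately show ?thesis
        using powr_ge_zero[of "ys ! l" t] by linarith
    qed (use assms(4) in \<open>simp_all add: g_def\<close>)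
  qed
  then have "(\<Sum>l<length xs. g l) \<le> (\<Sum>l<length xs. ys ! l powr t - xs ! l powr t)"
    by (intro sum_mono) simp
  moreover have "(\<Sum>l<length xs. g l) = ys ! k powr t - length xs * ?b"
    using assms(3) by (simp add: g_def sum_subtractf)
  ultimately show ?thesis
    using assms(2) by (simp add: sum_list_sum_nth atLeast0LessThan sum_subtractf)
qed

lemma sum_sorted_vals:
  fixes f :: "real \<Rightarrow> 'b::comm_monoid_add"
  assumes "finite A"
  shows "(\<Sum>j\<in>A. f (x j)) = sum_list (map f (sorted_vals A x))"
proof -
  have "sum_list (map f (sorted_vals A x)) = sum_list (map (f \<circ> x) (sorted_list_of_set A))"
    unfolding sorted_vals_def by (simp flip: sum_mset_sum_list add: multiset.map_comp)
  also have "\<dots> = (\<Sum>j\<in>A. f (x j))"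
    using assms by (simp add: sum.distinct_set_conv_list[symmetric])
  finally show ?thesis by simp
qed

lemma
  assumes "finite A"
  shows length_sorted_vals: "length (sorted_vals A x) = card A"
    and set_sorted_vals: "set (sorted_vals A x) = x ` A"
    and sorted_sorted_vals: "sorted (sorted_vals A x)"
  using assms by (simp_all add: sorted_vals_def)

lemma leximin_first_gap:
  assumes "finite A" "sorted_vals A y \<noteq> sorted_vals A x" "\<not> lex_gt A y x"
  obtains k where "k < card A" "\<forall>l<k. sorted_vals A x ! l = sorted_vals A y ! l"
    "sorted_vals A y ! k < sorted_vals A x ! k"
proof -
  let ?xs = "sorted_vals A x" and ?ys = "sorted_vals A y"
  have len: "length ?xs = card A" "length ?ys = card A"
    using assms(1) by (simp_all add: length_sorted_vals)
  then have "\<exists>k. k < card A \<and> ?xs ! k \<noteq> ?ys ! k"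
    using assms(2) nth_equalityI by (metis (no_types))
  then obtain k where k: "k < card A" "?xs ! k \<noteq> ?ys ! k"
    and before: "\<forall>l<k. ?xs ! l = ?ys ! l"
    using exists_least_iff[of "\<lambda>k. k < card A \<and> ?xs ! k \<noteq> ?ys ! k"] by (metis less_trans)
  have take_eq: "take l ?ys = take l ?xs" if "l \<le> k" for l
    using that k len before by (intro nth_take_lemma) auto
  have "\<not> ?xs ! k < ?ys ! k"
  proof
    assume less: "?xs ! k < ?ys ! k"
    have "prefsum A x (Suc k) < prefsum A y (Suc k)"
      using take_eq[of k] less k len by (simp add: prefsum_def take_Suc_conv_app_nth)
    moreover have "prefsum A y l = prefsum A x l" if "l < Suc k" for l
      using take_eq[of l] that by (simp add: prefsum_def)
    ultimately have "lex_gt A y x"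
      using k(1) unfolding lex_gt_def by (intro bexI[of _ "Suc k"]) auto
    with assms(3) show False ..
  qed
  with k before show ?thesis
    by (intro that) auto
qed

lemma pos_if_leximin_gap:
  assumes "finite A" "\<forall>j\<in>A. 0 < y j" "k < card A"
    and "\<forall>l<k. sorted_vals A x ! l = sorted_vals A y ! l" "sorted_vals A y ! k < sorted_vals A x ! k"
  shows "\<forall>j\<in>A. 0 < x j"
proof -
  let ?xs = "sorted_vals A x" and ?ys = "sorted_vals A y"
  have len: "length ?xs = card A" "length ?ys = card A"
    using assms(1) by (simp_all add: length_sorted_vals)
  have ys_pos: "0 < ?ys ! l" if "l < card A" for l
    using assms(1,2) that len set_sorted_vals[of A y] by (metis imageE nth_mem)
  have "0 < ?xs ! l" if "l < card A" for l
  proof (cases "l < k")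
    case True
    then show ?thesis
      using assms(4) ys_pos that by simp
  next
    case False
    then have "?xs ! k \<le> ?xs ! l"
      using assms(1) that len by (simp add: sorted_nth_mono sorted_sorted_vals)
    then show ?thesis
      using assms(5) ys_pos[OF assms(3)] by simp
  qed
  then show ?thesis
    using assms(1) len set_sorted_vals[of A x] by (metis imageI in_set_conv_nth)
qed

lemma Ulex_item_if_same_sorted_vals:
  assumes "x \<in> Ulex_item m n \<mu> v" "y \<in> Uset m n \<mu> v"
    and "sorted_vals (items m n) y = sorted_vals (items m n) x"
  shows "y \<in> Ulex_item m n \<mu> v"
proof -
  have "prefsum (items m n) y = prefsum (items m n) x"
    using assms(3) by (simp add: prefsum_def fun_eq_iff)
  then have "lex_gt (items m n) z y = lex_gt (items m n) z x" for z
    by (simp add: lex_gt_def)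
  then show ?thesis
    using assms(1,2) by (simp add: Ulex_item_def lex_ge_def)
qed

lemma antimono_weights_nonneg:
  fixes v :: "nat \<Rightarrow> real"
  assumes "\<forall>k. 1 \<le> k \<and> k < n - m \<longrightarrow> v (Suc k) \<le> v k" "0 \<le> v (n - m)"
    and "k \<in> {1..n-m}"
  shows "0 \<le> v k"
proof -
  have "k \<le> n - m" "1 \<le> k"
    using assms(3) by auto
  then have "v (n - m) \<le> v k"
    by (induction k rule: inc_induct) (use assms(1) in force)+
  with assms(2) show ?thesis
    by linarith
qed

lemma Uset_nonneg:
  assumes "\<forall>k\<in>{1..n-m}. 0 \<le> v k" "\<forall>i\<in>{1..n}. \<forall>j\<in>{1..n}. 0 \<le> \<mu> i j"
    and "u \<in> Uset m n \<mu> v"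
  shows "0 \<le> u i"
proof -
  obtain P where P: "ranking_tensor m n P" "u = util m n \<mu> v P"
    using assms(3) by (auto simp: Uset_def)
  have "0 \<le> P i j k" for i j k
    using P(1) unfolding ranking_tensor_def by (metis order_refl)
  then have "0 \<le> Pv m n P v i j" for i j
    using assms(1) unfolding Pv_def by (intro sum_nonneg) simp
  then show ?thesis
    using assms(2) by (auto simp: P(2) util_def intro!: sum_nonneg add_nonneg_nonneg)
qed

lemma psi_neq_PInf: "psi x a \<noteq> \<infinity>"
  by (simp add: psi_def)

lemma sum_psi_neq_PInf: "(\<Sum>j\<in>A. psi (x j) a) \<noteq> \<infinity>"
  by (simp add: sum_Pinfty psi_neq_PInf)

lemma sum_psi_eq_MInf:
  assumes "finite A" "j \<in> A" "x j = 0" "a \<le> 0"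
  shows "(\<Sum>j\<in>A. psi (x j) a) = -\<infinity>"
proof -
  have "(\<Sum>j\<in>A. psi (x j) a) = psi (x j) a + (\<Sum>j\<in>A - {j}. psi (x j) a)"
    using assms(1,2) by (simp add: sum.remove)
  moreover have "psi (x j) a = -\<infinity>"
    using assms(3,4) by (simp add: psi_def)
  ultimately show ?thesis
    using sum_psi_neq_PInf[of x a "A - {j}"] by simp
qed

lemma sum_psi_neg_exponent:
  assumes "finite A" "\<forall>j\<in>A. 0 < x j" "a < 0"
  shows "(\<Sum>j\<in>A. psi (x j) a) = ereal (- sum_list (map (\<lambda>s. s powr a) (sorted_vals A x)))"
proof -
  have "(\<Sum>j\<in>A. psi (x j) a) = (\<Sum>j\<in>A. ereal (- (x j powr a)))"
    using assms(2,3) by (intro sum.cong) (auto simp: psi_def)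
  also have "\<dots> = ereal (- (\<Sum>j\<in>A. x j powr a))"
    by (simp add: sum_negf)
  finally show ?thesis
    using sum_sorted_vals[OF assms(1), of "\<lambda>s. s powr a"] by simp
qed

lemma W_eq_MInf:
  assumes "0 < lam" "lam < 1"
    and "(\<Sum>i\<in>users m. psi (x i) a1) = -\<infinity> \<or> (\<Sum>j\<in>items m n. psi (x j) a2) = -\<infinity>"
  shows "W m n lam a1 a2 x = -\<infinity>"
  using assms sum_psi_neq_PInf[of x a1 "users m"] sum_psi_neq_PInf[of x a2 "items m n"]
  by (auto simp: W_def)

lemma W_le_if_same_sorted_vals:
  assumes "lam \<le> 1" "sorted_vals (items m n) y = sorted_vals (items m n) x"
    and "(\<Sum>i\<in>users m. psi (y i) a1) \<le> (\<Sum>i\<in>users m. psi (x i) a1)"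
  shows "W m n lam a1 a2 y \<le> W m n lam a1 a2 x"
proof -
  have "(\<Sum>j\<in>items m n. psi (y j) a2) = (\<Sum>j\<in>items m n. psi (x j) a2)"
    using assms(2) by (simp add: sum_sorted_vals[of _ "\<lambda>s. psi s a2"] items_def)
  moreover have "ereal (1 - lam) * (\<Sum>i\<in>users m. psi (y i) a1)
      \<le> ereal (1 - lam) * (\<Sum>i\<in>users m. psi (x i) a1)"
    using assms(1,3) by (intro ereal_mult_left_mono) auto
  ultimately show ?thesis
    by (simp add: W_def add_right_mono)
qed

lemma W_eventually_MInf:
  fixes c :: real
  assumes "1 < c" "(\<exists>j\<in>items m n. x j = 0) \<or> (\<Sum>i\<in>users m. psi (x i) a1) = -\<infinity>"
  shows "eventually (\<lambda>t. W m n (1 - c powr t) a1 t x = -\<infinity>) at_bot"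
  using eventually_gt_at_bot[of 0]
proof eventually_elim
  case (elim t)
  have "(\<Sum>i\<in>users m. psi (x i) a1) = -\<infinity> \<or> (\<Sum>j\<in>items m n. psi (x j) t) = -\<infinity>"
    using assms(2) elim by (auto intro: sum_psi_eq_MInf simp: items_def)
  then show ?case
    using assms(1) elim by (intro W_eq_MInf) (simp_all add: powr_less_one)
qed

lemma W_eventually_le_of_leximin_gap_pos:
  fixes m n :: nat and x y :: "nat \<Rightarrow> real" and c :: real
  defines xs_def: "xs \<equiv> sorted_vals (items m n) x"
    and ys_def: "ys \<equiv> sorted_vals (items m n) y"
  assumes c: "1 < c" and x_less: "\<forall>j\<in>items m n. x j < c"
    and y_pos: "\<forall>j\<in>items m n. 0 < y j"
    and sx: "(\<Sum>i\<in>users m. psi (x i) a1) = ereal sx"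
    and sy: "(\<Sum>i\<in>users m. psi (y i) a1) = ereal sy"
    and k: "k < card (items m n)" and before: "\<forall>l<k. xs ! l = ys ! l"
    and gap: "ys ! k < xs ! k"
  shows "eventually (\<lambda>t. W m n (1 - c powr t) a1 t y \<le> W m n (1 - c powr t) a1 t x) at_bot"
proof -
  let ?I = "items m n" and ?N = "card (items m n)"
  have fin: "finite ?I"
    by (simp add: items_def)
  have len: "length xs = ?N" "length ys = ?N"
    using fin by (simp_all add: xs_def ys_def length_sorted_vals)
  have sorted: "sorted xs"
    using fin by (simp add: xs_def sorted_sorted_vals)
  have x_pos: "\<forall>j\<in>?I. 0 < x j"
    using fin y_pos k before gap unfolding xs_def ys_def by (rule pos_if_leximin_gap)
  have ys_pos: "0 < ys ! k"
    using y_pos k len set_sorted_vals[OF fin, of y] unfolding ys_def by (metis imageE nth_mem)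
  then have xs_pos: "0 < xs ! k"
    using gap by simp
  have "xs ! k < c"
    using x_less k len set_sorted_vals[OF fin, of x] unfolding xs_def by (metis imageE nth_mem)
  then have "eventually (\<lambda>t. c powr t * (sy - sx)
      \<le> (1 - c powr t) * (ys ! k powr t - ?N * xs ! k powr t)) at_bot"
    using ys_pos c gap by (intro eventually_powr_gap_at_bot) auto
  then show ?thesis
    using eventually_gt_at_bot[of 0]
  proof eventually_elim
    case (elim t)
    define Sx where "Sx = sum_list (map (\<lambda>s. s powr t) xs)"
    define Sy where "Sy = sum_list (map (\<lambda>s. s powr t) ys)"
    have "ys ! k powr t - ?N * xs ! k powr t \<le> Sy - Sx"
      using sum_list_powr_gap[OF sorted, of ys k t] len k before xs_pos elim(2)
      by (simp add: Sx_def Sy_def)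
    moreover have "0 \<le> 1 - c powr t"
      using c elim(2) powr_less_one[of c t] by simp
    ultimately have "c powr t * (sy - sx) \<le> (1 - c powr t) * (Sy - Sx)"
      using elim(1) by (meson mult_left_mono order_trans)
    then have "c powr t * sy + (1 - c powr t) * (- Sy) \<le> c powr t * sx + (1 - c powr t) * (- Sx)"
      by (simp add: algebra_simps)
    moreover have "(\<Sum>j\<in>?I. psi (x j) t) = ereal (- Sx)" "(\<Sum>j\<in>?I. psi (y j) t) = ereal (- Sy)"
      using sum_psi_neg_exponent[OF fin x_pos elim(2)] sum_psi_neg_exponent[OF fin y_pos elim(2)]
      by (simp_all add: Sx_def Sy_def xs_def ys_def)
    ultimately show ?case
      by (simp add: W_def sx sy)
  qed
qed

lemma W_eventually_le_of_leximin_gap: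
  fixes m n :: nat and x y :: "nat \<Rightarrow> real" and c :: real
  defines xs_def: "xs \<equiv> sorted_vals (items m n) x"
    and ys_def: "ys \<equiv> sorted_vals (items m n) y"
  assumes c: "1 < c" and x_less: "\<forall>j\<in>items m n. x j < c"
    and y_nonneg: "\<forall>j\<in>items m n. 0 \<le> y j"
    and sx: "(\<Sum>i\<in>users m. psi (x i) a1) = ereal sx"
    and k: "k < card (items m n)" and before: "\<forall>l<k. xs ! l = ys ! l"
    and gap: "ys ! k < xs ! k"
  shows "eventually (\<lambda>t. W m n (1 - c powr t) a1 t y \<le> W m n (1 - c powr t) a1 t x) at_bot"
proof (cases "(\<exists>j\<in>items m n. y j = 0) \<or> (\<Sum>i\<in>users m. psi (y i) a1) = -\<infinity>")
  case True
  with c show ?thesis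
    by (rule W_eventually_MInf[THEN eventually_mono]) simp
next
  case False
  then obtain sy where "(\<Sum>i\<in>users m. psi (y i) a1) = ereal sy"
    using sum_psi_neq_PInf by (cases "\<Sum>i\<in>users m. psi (y i) a1") auto
  moreover have "\<forall>j\<in>items m n. 0 < y j"
    using False y_nonneg by (auto simp: less_le)
  ultimately show ?thesis
    using c x_less sx k before gap unfolding xs_def ys_def by (intro W_eventually_le_of_leximin_gap_pos)
qed

theorem mainTheorem10:
  fixes m n :: nat and v :: "nat \<Rightarrow> real" and \<mu> :: "nat \<Rightarrow> nat \<Rightarrow> real"
    and \<alpha>1 \<eta> :: real and ustar u :: "nat \<Rightarrow> real"
  assumes "m < n"
    and "\<forall>k. 1 \<le> k \<and> k < n - m \<longrightarrow> v (Suc k) \<le> v k"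
    and "0 \<le> v (n - m)"
    and "\<forall>i\<in>{1..n}. \<forall>j\<in>{1..n}. 0 \<le> \<mu> i j"
    and "\<alpha>1 < 1"
    and "ustar \<in> Ulex_item m n \<mu> v"
    and "\<forall>u'\<in>Ulex_item m n \<mu> v. (\<Sum>i\<in>users m. psi (u' i) \<alpha>1) \<le> (\<Sum>i\<in>users m. psi (ustar i) \<alpha>1)"
    and "(\<Sum>i\<in>users m. psi (ustar i) \<alpha>1) > -\<infinity>"
    and "\<eta> > max 1 (Max (ustar ` items m n))"
    and "u \<in> Uset m n \<mu> v"
  shows "\<exists>\<alpha>0 < 0. \<forall>\<alpha>\<le>\<alpha>0.
           W m n (1 - \<eta> powr \<alpha>) \<alpha>1 \<alpha> ustar \<ge> W m n (1 - \<eta> powr \<alpha>) \<alpha>1 \<alpha> u"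
proof -
  let ?I = "items m n" and ?W = "\<lambda>t. W m n (1 - \<eta> powr t) \<alpha>1 t"
  have \<eta>: "1 < \<eta>"
    using assms(9) by simp
  have ustar_less: "\<forall>j\<in>?I. ustar j < \<eta>"
  proof
    fix j
    assume "j \<in> ?I"
    then have "ustar j \<le> Max (ustar ` ?I)"
      by (simp add: items_def)
    with assms(9) show "ustar j < \<eta>"
      by simp
  qed
  obtain sx where sx: "(\<Sum>i\<in>users m. psi (ustar i) \<alpha>1) = ereal sx"
    using assms(8) sum_psi_neq_PInf by (cases "\<Sum>i\<in>users m. psi (ustar i) \<alpha>1") auto
  have fin: "finite ?I"
    by (simp add: items_def)
  have not_gt: "\<not> lex_gt ?I u ustar"
    using assms(6,10) by (simp add: Ulex_item_def lex_ge_def)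
  have "eventually (\<lambda>t. ?W t u \<le> ?W t ustar) at_bot"
  proof (cases "sorted_vals ?I u = sorted_vals ?I ustar")
    case True
    have "u \<in> Ulex_item m n \<mu> v"
      using assms(6,10) True by (rule Ulex_item_if_same_sorted_vals)
    then have "(\<Sum>i\<in>users m. psi (u i) \<alpha>1) \<le> (\<Sum>i\<in>users m. psi (ustar i) \<alpha>1)"
      using assms(7) by blast
    with True show ?thesis
      by (intro always_eventually allI W_le_if_same_sorted_vals) simp_all
  next
    case False
    obtain k where k: "k < card ?I" "\<forall>l<k. sorted_vals ?I ustar ! l = sorted_vals ?I u ! l"
      "sorted_vals ?I u ! k < sorted_vals ?I ustar ! k"
      using fin False not_gt by (rule leximin_first_gap)
    have "\<forall>k\<in>{1..n-m}. 0 \<le> v k"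
      using antimono_weights_nonneg[OF assms(2,3)] by blast
    then have "0 \<le> u j" for j
      using assms(4,10) by (rule Uset_nonneg)
    with \<eta> ustar_less sx k show ?thesis
      by (intro W_eventually_le_of_leximin_gap) auto
  qed
  then show ?thesis
    by (rule eventually_at_bot_real_negative)
qed

end
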